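(* Let $n\ge 2$, let $\mathbb{F}_q$ be a finite field with $q$ elements, let $UU_n(\mathbb{F}_q)$ be the group of $n\times n$ upper triangular unipotent matrices over $\mathbb{F}_q$, and let \[S_0=\{A=(a_{ij})\in UU_n(\mathbb{F}_q): \textstyle\prod_{i=1}^{n-1}a_{i,i+1}\neq 0\}.\] Then $\omega(S_0)=(q-1)^{n-2}q^{\binom{n-2}{2}}$.
   Context: A subset $N$ of a group is non-commuting if $xy\ne yx$ for all distinct $x,y\in N$; for a subset $S$ of a group, $\omega(S)$ is the maximum cardinality of a non-commuting subset of $S$. *)

theory Defs
  imports "Jordan_Normal_Form.Matrix"
begin

definition non_commuting :: "'a::times set \<Rightarrow> bool" where
  "non_commuting N \<longleftrightarrow> (\<forall>x\<in>N. \<forall>y\<in>N. x \<noteq> y \<longrightarrow> x * y \<noteq> y * x)"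

definition omega :: "'a::times set \<Rightarrow> nat" where
  "omega S = Max {card N | N. N \<subseteq> S \<and> finite N \<and> non_commuting N}"

definition UU :: "nat \<Rightarrow> 'a::{zero,one} mat set" where
  "UU n = {A \<in> carrier_mat n n. upper_triangular A \<and> (\<forall>i<n. A $$ (i,i) = 1)}"

text \<open>S_0, with 0-based indices: product of superdiagonal entries nonzero.\<close>
definition S0 :: "nat \<Rightarrow> 'a::{comm_semiring_1} mat set" where
  "S0 n = {A \<in> UU n. (\<Prod>i<n-1. A $$ (i, i+1)) \<noteq> 0}"

end

theory Submission
  imports Defs
begin

text \<open>
  For \<open>x \<in> S\<^sub>0\<close> the matrix \<open>N = x - 1\<close> is strictly upper triangular with nonzero
  superdiagonal, so the last unit vector is a cyclic vector for \<open>N\<close>: the polynomials in \<open>N\<close>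
  realise every possible last column. Hence a matrix commuting with \<open>N\<close> is determined by its
  last column, the centraliser of \<open>x\<close> is the commutative algebra of polynomials in \<open>N\<close>, and
  commuting is an equivalence relation on \<open>S\<^sub>0\<close>. Each class contains exactly one element
  whose last column is \<open>(0, \<dots>, 0, 1, 1)\<close>, so a non-commuting subset of \<open>S\<^sub>0\<close> has at most
  as many elements as there are such normal forms, and the normal forms themselves form a
  non-commuting set. They are counted by their free entries: those above the diagonal outside
  the last column, which must be nonzero on the superdiagonal.
\<close>

lemma index_mult_mat_sum:
  assumes "A \<in> carrier_mat n n" "B \<in> carrier_mat n n" "i < n" "j < n"
  shows "(A * B) $$ (i, j) = (\<Sum>k<n. A $$ (i, k) * B $$ (k, j))"
  using assms by (simp add: scalar_prod_def atLeast0LessThan)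

lemma sum_lessThan_single:
  fixes n :: nat
  assumes "j < n" "\<And>k. k < n \<Longrightarrow> k \<noteq> j \<Longrightarrow> f k = 0"
  shows "(\<Sum>k<n. f k) = (f j :: 'a::comm_monoid_add)"
proof -
  have "sum f {..<n} = sum f {j}" by (rule sum.mono_neutral_right) (use assms in auto)
  then show ?thesis by simp
qed

section \<open>Centralisers of regular nilpotent matrices\<close>

definition regular_nilpotent :: "nat \<Rightarrow> 'a::field mat \<Rightarrow> bool" where
  "regular_nilpotent n N \<longleftrightarrow> N \<in> carrier_mat n n
     \<and> (\<forall>i j. i < n \<longrightarrow> j \<le> i \<longrightarrow> N $$ (i, j) = 0)
     \<and> (\<forall>i. Suc i < n \<longrightarrow> N $$ (i, Suc i) \<noteq> 0)"

lemma regular_nilpotentD: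
  assumes "regular_nilpotent n N"
  shows "N \<in> carrier_mat n n" "\<And>i j. i < n \<Longrightarrow> j \<le> i \<Longrightarrow> N $$ (i, j) = 0"
    "\<And>i. Suc i < n \<Longrightarrow> N $$ (i, Suc i) \<noteq> 0"
  using assms by (auto simp: regular_nilpotent_def)

inductive_set generated_algebra :: "nat \<Rightarrow> 'a::field mat \<Rightarrow> 'a mat set" for n N where
  one: "1\<^sub>m n \<in> generated_algebra n N"
| mult: "A \<in> generated_algebra n N \<Longrightarrow> N * A \<in> generated_algebra n N"
| add: "A \<in> generated_algebra n N \<Longrightarrow> B \<in> generated_algebra n N \<Longrightarrow> A + B \<in> generated_algebra n N"
| smult: "A \<in> generated_algebra n N \<Longrightarrow> c \<cdot>\<^sub>m A \<in> generated_algebra n N"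

lemma generated_algebra_carrier:
  assumes "N \<in> carrier_mat n n" "A \<in> generated_algebra n N"
  shows "A \<in> carrier_mat n n"
  using assms(2) by induction (use assms(1) in auto)

lemma generated_algebra_commute:
  assumes N: "N \<in> carrier_mat n n" and B: "B \<in> carrier_mat n n" and BN: "B * N = N * B"
    and A: "A \<in> generated_algebra n N"
  shows "A * B = B * A"
  using A
proof induction
  case one
  then show ?case using B by simp
next
  case (mult A)
  have A: "A \<in> carrier_mat n n" using generated_algebra_carrier[OF N mult(1)] .
  have "(N * A) * B = N * (A * B)" using A N B by simp
  also have "\<dots> = N * (B * A)" using mult(2) by simp
  also have "\<dots> = (N * B) * A" using A N B by simp
  also have "\<dots> = (B * N) * A" using BN by simp
  also have "\<dots> = B * (N * A)" using A N B by simp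
  finally show ?case .
next
  case (add A C)
  have "A \<in> carrier_mat n n" "C \<in> carrier_mat n n"
    using generated_algebra_carrier[OF N] add(1,2) by auto
  then show ?case using add(3,4) B by (simp add: add_mult_distrib_mat mult_add_distrib_mat)
next
  case (smult A c)
  have "A \<in> carrier_mat n n" using generated_algebra_carrier[OF N smult(1)] .
  then show ?case using smult(2) B by (simp add: mult_smult_assoc_mat mult_smult_distrib)
qed

lemma generated_algebra_last_col_staircase:
  assumes N: "regular_nilpotent n N" and t: "t < n"
  shows "\<exists>P\<in>generated_algebra n N. P $$ (t, n - 1) \<noteq> 0
           \<and> (\<forall>i. t < i \<longrightarrow> i < n \<longrightarrow> P $$ (i, n - 1) = 0)"
proof -
  have Nc: "N \<in> carrier_mat n n" using regular_nilpotentD(1)[OF N] .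
  from t have "t \<le> n - 1" by simp
  then show ?thesis
  proof (induction t rule: inc_induct)
    case base
    show ?case by (rule bexI[of _ "1\<^sub>m n"]) (use t in \<open>auto intro: generated_algebra.one\<close>)
  next
    case (step t)
    then obtain P where P: "P \<in> generated_algebra n N" and Pt: "P $$ (Suc t, n - 1) \<noteq> 0"
      and below: "\<And>i. Suc t < i \<Longrightarrow> i < n \<Longrightarrow> P $$ (i, n - 1) = 0" by blast
    have Pc: "P \<in> carrier_mat n n" using generated_algebra_carrier[OF Nc P] .
    have "t < n - 1" "t < n" using step.hyps by auto
    have NP: "(N * P) $$ (i, n - 1) = (\<Sum>k<n. N $$ (i, k) * P $$ (k, n - 1))" if "i < n" for i
      using index_mult_mat_sum[OF Nc Pc that] \<open>t < n\<close> by simp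
    have "(N * P) $$ (t, n - 1) = N $$ (t, Suc t) * P $$ (Suc t, n - 1)"
      unfolding NP[OF \<open>t < n\<close>]
    proof (rule sum_lessThan_single)
      fix k assume "k < n" "k \<noteq> Suc t"
      then show "N $$ (t, k) * P $$ (k, n - 1) = 0"
        using regular_nilpotentD(2)[OF N \<open>t < n\<close>, of k] below[of k] by (cases "k \<le> t") auto
    qed (use \<open>t < n - 1\<close> in simp)
    also have "\<dots> \<noteq> 0" using Pt regular_nilpotentD(3)[OF N] \<open>t < n - 1\<close> by simp
    finally have "(N * P) $$ (t, n - 1) \<noteq> 0" .
    moreover have "\<forall>i. t < i \<longrightarrow> i < n \<longrightarrow> (N * P) $$ (i, n - 1) = 0"
    proof (intro allI impI)
      fix i assume "t < i" "i < n"
      show "(N * P) $$ (i, n - 1) = 0"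
        unfolding NP[OF \<open>i < n\<close>]
      proof (rule sum.neutral, intro ballI)
        fix k assume "k \<in> {..<n}"
        then show "N $$ (i, k) * P $$ (k, n - 1) = 0"
          using regular_nilpotentD(2)[OF N \<open>i < n\<close>, of k] below[of k] \<open>t < i\<close>
          by (cases "k \<le> i") auto
      qed
    qed
    ultimately show ?case using generated_algebra.mult[OF P] by blast
  qed
qed

lemma generated_algebra_last_col_surj:
  assumes N: "regular_nilpotent n N"
  shows "\<exists>P\<in>generated_algebra n N. \<forall>i<n. P $$ (i, n - 1) = w i"
proof -
  have Nc: "N \<in> carrier_mat n n" using regular_nilpotentD(1)[OF N] .
  have "\<exists>P\<in>generated_algebra n N. \<forall>i<n. P $$ (i, n - 1) = w i"
    if "m \<le> n" "\<And>i. m \<le> i \<Longrightarrow> i < n \<Longrightarrow> w i = 0" for m w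
    using that
  proof (induction m arbitrary: w)
    case 0
    have "0 \<cdot>\<^sub>m 1\<^sub>m n \<in> generated_algebra n N"
      by (intro generated_algebra.smult generated_algebra.one)
    then show ?case using 0 by (intro bexI[of _ "0 \<cdot>\<^sub>m 1\<^sub>m n"]) auto
  next
    case (Suc m)
    obtain P where P: "P \<in> generated_algebra n N" and Pm: "P $$ (m, n - 1) \<noteq> 0"
      and below: "\<And>i. m < i \<Longrightarrow> i < n \<Longrightarrow> P $$ (i, n - 1) = 0"
      using generated_algebra_last_col_staircase[OF N, of m] Suc.prems(1) by auto
    define c where "c = w m / P $$ (m, n - 1)"
    have "\<exists>Q\<in>generated_algebra n N. \<forall>i<n. Q $$ (i, n - 1) = w i - c * P $$ (i, n - 1)"
    proof (rule Suc.IH)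
      fix i assume "m \<le> i" "i < n"
      then show "w i - c * P $$ (i, n - 1) = 0"
        using Pm below[of i] Suc.prems(2)[of i] by (cases "i = m") (auto simp: c_def)
    qed (use Suc.prems(1) in simp)
    then obtain Q where Q: "Q \<in> generated_algebra n N"
      and Qw: "\<And>i. i < n \<Longrightarrow> Q $$ (i, n - 1) = w i - c * P $$ (i, n - 1)" by blast
    have "Q + c \<cdot>\<^sub>m P \<in> generated_algebra n N"
      by (intro generated_algebra.add generated_algebra.smult Q P)
    moreover have "Q \<in> carrier_mat n n" "P \<in> carrier_mat n n"
      using generated_algebra_carrier[OF Nc] P Q by auto
    ultimately show ?case using Qw by (intro bexI[of _ "Q + c \<cdot>\<^sub>m P"]) auto
  qed
  from this[of n w] show ?thesis by simp
qed

lemma commute_regular_nilpotent_eq_zero: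
  assumes N: "regular_nilpotent n N" and A: "A \<in> carrier_mat n n" and AN: "A * N = N * A"
    and last_col: "\<And>i. i < n \<Longrightarrow> A $$ (i, n - 1) = 0"
  shows "A = 0\<^sub>m n n"
proof (rule eq_matI)
  have Nc: "N \<in> carrier_mat n n" using regular_nilpotentD(1)[OF N] .
  fix i j assume "i < dim_row (0\<^sub>m n n :: 'a mat)" "j < dim_col (0\<^sub>m n n :: 'a mat)"
  then have ij: "i < n" "j < n" by auto
  txt \<open>If \<open>P e = e\<^sub>j\<close> for the last unit vector \<open>e\<close>, then \<open>A e\<^sub>j = A P e = P A e = 0\<close>.\<close>
  obtain P where P: "P \<in> generated_algebra n N"
    and Pj: "\<And>k. k < n \<Longrightarrow> P $$ (k, n - 1) = (if k = j then 1 else 0)"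
    using generated_algebra_last_col_surj[OF N, of "\<lambda>k. if k = j then 1 else 0"] by blast
  have Pc: "P \<in> carrier_mat n n" using generated_algebra_carrier[OF Nc P] .
  have "A $$ (i, j) = (\<Sum>k<n. if k = j then A $$ (i, k) else 0)" using ij by simp
  also have "\<dots> = (\<Sum>k<n. A $$ (i, k) * P $$ (k, n - 1))" by (rule sum.cong) (use Pj in auto)
  also have "\<dots> = (A * P) $$ (i, n - 1)" using index_mult_mat_sum[OF A Pc] ij by simp
  also have "\<dots> = (P * A) $$ (i, n - 1)" using generated_algebra_commute[OF Nc A AN P] by simp
  also have "\<dots> = (\<Sum>k<n. P $$ (i, k) * A $$ (k, n - 1))" using index_mult_mat_sum[OF Pc A] ij by simp
  also have "\<dots> = 0" using last_col by simp
  finally show "A $$ (i, j) = 0\<^sub>m n n $$ (i, j)" using ij by simp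
qed (use A in auto)

lemma commute_regular_nilpotent_mem_generated_algebra:
  assumes N: "regular_nilpotent n N" and X: "X \<in> carrier_mat n n" and XN: "X * N = N * X"
  shows "X \<in> generated_algebra n N"
proof -
  have Nc: "N \<in> carrier_mat n n" using regular_nilpotentD(1)[OF N] .
  obtain P where P: "P \<in> generated_algebra n N" and XP: "\<And>i. i < n \<Longrightarrow> P $$ (i, n - 1) = X $$ (i, n - 1)"
    using generated_algebra_last_col_surj[OF N, of "\<lambda>i. X $$ (i, n - 1)"] by blast
  have Pc: "P \<in> carrier_mat n n" using generated_algebra_carrier[OF Nc P] .
  have comm: "(X - P) * N = N * (X - P)"
    using X Pc Nc XN generated_algebra_commute[OF Nc Nc refl P]
    by (simp add: minus_mult_distrib_mat mult_minus_distrib_mat)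
  have "X - P = 0\<^sub>m n n"
    by (rule commute_regular_nilpotent_eq_zero[OF N _ comm]) (use X Pc XP in auto)
  then have "X = P" using X Pc by (auto simp: mat_eq_iff)
  then show ?thesis using P by simp
qed

lemma commute_of_commute_regular_nilpotent:
  assumes N: "regular_nilpotent n N"
    and X: "X \<in> carrier_mat n n" "X * N = N * X" and Y: "Y \<in> carrier_mat n n" "Y * N = N * Y"
  shows "X * Y = Y * X"
  using generated_algebra_commute[OF regular_nilpotentD(1)[OF N] Y
      commute_regular_nilpotent_mem_generated_algebra[OF N X]] .

lemma regular_nilpotent_mult_upper_triangular:
  assumes N: "regular_nilpotent n N" and A: "A \<in> carrier_mat n n"
    and lower: "\<And>i j. i < n \<Longrightarrow> j < i \<Longrightarrow> A $$ (i, j) = 0"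
  shows "\<And>i j. i < n \<Longrightarrow> j \<le> i \<Longrightarrow> (N * A) $$ (i, j) = 0"
    and "\<And>i. Suc i < n \<Longrightarrow> (N * A) $$ (i, Suc i) = N $$ (i, Suc i) * A $$ (Suc i, Suc i)"
proof -
  have Nc: "N \<in> carrier_mat n n" using regular_nilpotentD(1)[OF N] .
  have NA: "(N * A) $$ (i, j) = (\<Sum>k<n. N $$ (i, k) * A $$ (k, j))" if "i < n" "j < n" for i j
    using index_mult_mat_sum[OF Nc A that] .
  show "(N * A) $$ (i, j) = 0" if "i < n" "j \<le> i" for i j
    unfolding NA[OF that(1) le_less_trans[OF that(2,1)]]
  proof (rule sum.neutral, intro ballI)
    fix k assume "k \<in> {..<n}"
    then show "N $$ (i, k) * A $$ (k, j) = 0"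
      using regular_nilpotentD(2)[OF N \<open>i < n\<close>, of k] lower[of k j] that by (cases "k \<le> i") auto
  qed
  show "(N * A) $$ (i, Suc i) = N $$ (i, Suc i) * A $$ (Suc i, Suc i)" if "Suc i < n" for i
    unfolding NA[OF Suc_lessD[OF that] that]
  proof (rule sum_lessThan_single)
    fix k assume "k < n" "k \<noteq> Suc i"
    then show "N $$ (i, k) * A $$ (k, Suc i) = 0"
      using regular_nilpotentD(2)[OF N Suc_lessD[OF that], of k] lower[of k "Suc i"]
      by (cases "k \<le> i") auto
  qed (rule that)
qed

lemma generated_algebra_band:
  assumes N: "regular_nilpotent n N" and P: "P \<in> generated_algebra n N"
  shows "\<exists>c d. (\<forall>i j. i < n \<longrightarrow> j < i \<longrightarrow> P $$ (i, j) = 0) \<and> (\<forall>i<n. P $$ (i, i) = c)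
           \<and> (\<forall>i. Suc i < n \<longrightarrow> P $$ (i, Suc i) = d * N $$ (i, Suc i))"
proof -
  have Nc: "N \<in> carrier_mat n n" using regular_nilpotentD(1)[OF N] .
  from P show ?thesis
  proof induction
    case one
    show ?case by (intro exI[of _ 1] exI[of _ 0]) auto
  next
    case (mult A)
    have Ac: "A \<in> carrier_mat n n" using generated_algebra_carrier[OF Nc mult(1)] .
    from mult(2) obtain c where lower: "\<And>i j. i < n \<Longrightarrow> j < i \<Longrightarrow> A $$ (i, j) = 0"
      and diag: "\<And>i. i < n \<Longrightarrow> A $$ (i, i) = c" by blast
    show ?case
      using regular_nilpotent_mult_upper_triangular[OF N Ac lower] diag
      by (intro exI[of _ 0] exI[of _ c]) auto
  next
    case (add A B)
    have "A \<in> carrier_mat n n" "B \<in> carrier_mat n n"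
      using generated_algebra_carrier[OF Nc] add(1,2) by auto
    moreover obtain c d where "\<forall>i j. i < n \<longrightarrow> j < i \<longrightarrow> A $$ (i, j) = 0" "\<forall>i<n. A $$ (i, i) = c"
      "\<forall>i. Suc i < n \<longrightarrow> A $$ (i, Suc i) = d * N $$ (i, Suc i)" using add(3) by blast
    moreover obtain c' d' where "\<forall>i j. i < n \<longrightarrow> j < i \<longrightarrow> B $$ (i, j) = 0" "\<forall>i<n. B $$ (i, i) = c'"
      "\<forall>i. Suc i < n \<longrightarrow> B $$ (i, Suc i) = d' * N $$ (i, Suc i)" using add(4) by blast
    ultimately show ?case
      by (intro exI[of _ "c + c'"] exI[of _ "d + d'"]) (auto simp: distrib_right)
  next
    case (smult A e)
    have "A \<in> carrier_mat n n" using generated_algebra_carrier[OF Nc smult(1)] .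
    moreover obtain c d where "\<forall>i j. i < n \<longrightarrow> j < i \<longrightarrow> A $$ (i, j) = 0" "\<forall>i<n. A $$ (i, i) = c"
      "\<forall>i. Suc i < n \<longrightarrow> A $$ (i, Suc i) = d * N $$ (i, Suc i)" using smult(2) by blast
    ultimately show ?case by (intro exI[of _ "e * c"] exI[of _ "e * d"]) auto
  qed
qed

lemma mem_S0_iff:
  "A \<in> S0 n \<longleftrightarrow> A \<in> carrier_mat n n \<and> (\<forall>i j. i < n \<longrightarrow> j < i \<longrightarrow> A $$ (i, j) = 0)
     \<and> (\<forall>i<n. A $$ (i, i) = 1) \<and> (\<forall>i. Suc i < n \<longrightarrow> A $$ (i, Suc i) \<noteq> 0)"
  for A :: "'a::idom mat"
proof -
  have "(\<Prod>i<n - 1. A $$ (i, i + 1)) \<noteq> 0 \<longleftrightarrow> (\<forall>i. Suc i < n \<longrightarrow> A $$ (i, Suc i) \<noteq> 0)"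
    by (auto simp: prod_zero_iff)
  then show ?thesis by (auto simp: S0_def UU_def upper_triangular_def)
qed

lemma S0_minus_one_regular_nilpotent:
  assumes "A \<in> S0 n"
  shows "regular_nilpotent n (A - 1\<^sub>m n)"
  using assms by (auto simp: mem_S0_iff regular_nilpotent_def le_less)

lemma commute_minus_one_iff:
  fixes A B :: "'a::ring_1 mat"
  assumes "A \<in> carrier_mat n n" "B \<in> carrier_mat n n"
  shows "A * (B - 1\<^sub>m n) = (B - 1\<^sub>m n) * A \<longleftrightarrow> A * B = B * A"
  using assms by (auto simp: mult_minus_distrib_mat minus_mult_distrib_mat mat_eq_iff)

lemma S0_commute_trans:
  fixes x y r :: "'a::field mat"
  assumes r: "r \<in> S0 n" and x: "x \<in> carrier_mat n n" "x * r = r * x"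
    and y: "y \<in> carrier_mat n n" "y * r = r * y"
  shows "x * y = y * x"
proof -
  have rc: "r \<in> carrier_mat n n" using r by (simp add: mem_S0_iff)
  show ?thesis
    by (rule commute_of_commute_regular_nilpotent[OF S0_minus_one_regular_nilpotent[OF r]])
      (use x y rc commute_minus_one_iff in auto)
qed

lemma one_add_generated_algebra_mem_S0:
  assumes N: "regular_nilpotent n N" and P: "P \<in> generated_algebra n N" and n: "n \<ge> 2"
    and "P $$ (n - 1, n - 1) = 0" and "P $$ (n - 2, n - 1) \<noteq> 0"
  shows "1\<^sub>m n + P \<in> S0 n"
proof -
  have Pc: "P \<in> carrier_mat n n" using generated_algebra_carrier[OF regular_nilpotentD(1)[OF N] P] .
  obtain c d where lower: "\<And>i j. i < n \<Longrightarrow> j < i \<Longrightarrow> P $$ (i, j) = 0"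
    and diag: "\<And>i. i < n \<Longrightarrow> P $$ (i, i) = c"
    and super: "\<And>i. Suc i < n \<Longrightarrow> P $$ (i, Suc i) = d * N $$ (i, Suc i)"
    using generated_algebra_band[OF N P] by blast
  have "c = 0" using diag[of "n - 1"] assms(4) n by simp
  have "d \<noteq> 0" using super[of "n - 2"] assms(5) n by (auto simp: Suc_diff_Suc numeral_2_eq_2)
  show ?thesis
    unfolding mem_S0_iff using Pc lower diag \<open>c = 0\<close> super \<open>d \<noteq> 0\<close> regular_nilpotentD(3)[OF N]
    by auto
qed

definition S0_transversal :: "nat \<Rightarrow> 'a::field mat set" where
  "S0_transversal n = {A \<in> S0 n. \<forall>i<n. A $$ (i, n - 1) = (if n - 2 \<le> i then 1 else 0)}"

lemma S0_transversal_non_commuting: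
  fixes r r' :: "'a::field mat"
  assumes r: "r \<in> S0_transversal n" and r': "r' \<in> S0_transversal n" and comm: "r * r' = r' * r"
  shows "r = r'"
proof -
  have rS: "r \<in> S0 n" using r by (simp add: S0_transversal_def)
  have rc: "r \<in> carrier_mat n n" "r' \<in> carrier_mat n n"
    using r r' by (auto simp: S0_transversal_def mem_S0_iff)
  have Dc: "r - r' \<in> carrier_mat n n" using rc by (simp add: minus_carrier_mat)
  have "(r - r') * r = r * (r - r')"
    using rc comm by (simp add: mult_minus_distrib_mat minus_mult_distrib_mat)
  then have "(r - r') * (r - 1\<^sub>m n) = (r - 1\<^sub>m n) * (r - r')"
    using commute_minus_one_iff[OF Dc rc(1)] by simp
  then have "r - r' = 0\<^sub>m n n"
    by (rule commute_regular_nilpotent_eq_zero[OF S0_minus_one_regular_nilpotent[OF rS], rotated])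
      (use r r' rc in \<open>auto simp: S0_transversal_def\<close>)
  then show ?thesis using rc by (auto simp: mat_eq_iff)
qed

lemma ex_S0_transversal_commute:
  fixes x :: "'a::field mat"
  assumes n: "n \<ge> 2" and x: "x \<in> S0 n"
  shows "\<exists>r\<in>S0_transversal n. x * r = r * x"
proof -
  define N where "N = x - 1\<^sub>m n"
  have N: "regular_nilpotent n N" using S0_minus_one_regular_nilpotent[OF x] by (simp add: N_def)
  have xc: "x \<in> carrier_mat n n" and Nc: "N \<in> carrier_mat n n"
    using x N by (auto simp: mem_S0_iff regular_nilpotent_def)
  obtain P where P: "P \<in> generated_algebra n N"
    and P_last: "\<And>i. i < n \<Longrightarrow> P $$ (i, n - 1) = (if i = n - 2 then 1 else 0)"
    using generated_algebra_last_col_surj[OF N, of "\<lambda>i. if i = n - 2 then 1 else 0"] by blast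
  have Pc: "P \<in> carrier_mat n n" using generated_algebra_carrier[OF Nc P] .
  define r where "r = 1\<^sub>m n + P"
  have rc: "r \<in> carrier_mat n n" using Pc by (simp add: r_def)
  have "r \<in> S0 n"
    unfolding r_def by (rule one_add_generated_algebra_mem_S0[OF N P n]) (use P_last n in auto)
  moreover have "\<forall>i<n. r $$ (i, n - 1) = (if n - 2 \<le> i then 1 else 0)"
    using Pc P_last n by (auto simp: r_def)
  moreover have "x * r = r * x"
  proof -
    have "P * x = x * P"
      using generated_algebra_commute[OF Nc Nc refl P] commute_minus_one_iff[OF Pc xc]
      by (simp add: N_def)
    moreover have "r - 1\<^sub>m n = P" using Pc by (auto simp: r_def mat_eq_iff)
    ultimately show ?thesis using commute_minus_one_iff[OF xc rc] by simp
  qed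
  ultimately show ?thesis by (auto simp: S0_transversal_def)
qed

section \<open>Counting the normal forms\<close>

definition transversal_positions :: "nat \<Rightarrow> (nat \<times> nat) set" where
  "transversal_positions n = {(i, j). i < j \<and> j < n - 1}"

definition transversal_entries :: "nat \<times> nat \<Rightarrow> 'a::zero set" where
  "transversal_entries p = (if snd p = Suc (fst p) then - {0} else UNIV)"

definition transversal_mat :: "nat \<Rightarrow> (nat \<times> nat \<Rightarrow> 'a::{zero,one}) \<Rightarrow> 'a mat" where
  "transversal_mat n f = mat n n (\<lambda>(i, j). if (i, j) \<in> transversal_positions n then f (i, j)
     else if i = j \<or> (i, j) = (n - 2, n - 1) then 1 else 0)"

lemma finite_transversal_positions: "finite (transversal_positions n)"
  by (rule finite_subset[of _ "{..<n} \<times> {..<n}"]) (auto simp: transversal_positions_def)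

lemma transversal_mat_restrict:
  assumes n: "n \<ge> 2" and A: "A \<in> S0_transversal n"
  shows "transversal_mat n (restrict (\<lambda>p. A $$ p) (transversal_positions n)) = A"
proof -
  have A: "A \<in> carrier_mat n n" "\<And>i j. i < n \<Longrightarrow> j < i \<Longrightarrow> A $$ (i, j) = 0"
    "\<And>i. i < n \<Longrightarrow> A $$ (i, i) = 1" "\<And>i. i < n \<Longrightarrow> A $$ (i, n - 1) = (if n - 2 \<le> i then 1 else 0)"
    using A by (auto simp: S0_transversal_def mem_S0_iff)
  show ?thesis
  proof (rule eq_matI)
    fix i j assume "i < dim_row A" "j < dim_col A"
    then have ij: "i < n" "j < n" using A(1) by auto
    show "transversal_mat n (restrict (\<lambda>p. A $$ p) (transversal_positions n)) $$ (i, j) = A $$ (i, j)"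
    proof (cases "j < i")
      case True
      then show ?thesis using ij A(2) by (auto simp: transversal_mat_def transversal_positions_def)
    next
      case False
      then consider "i = j" | "i < j" "j < n - 1" | "i < j" "j = n - 1" using ij by linarith
      then show ?thesis
        by cases (use ij A n in \<open>auto simp: transversal_mat_def transversal_positions_def\<close>)
    qed
  qed (use A(1) in \<open>auto simp: transversal_mat_def\<close>)
qed

lemma restrict_transversal_mat:
  assumes "f \<in> PiE (transversal_positions n) transversal_entries"
  shows "restrict (\<lambda>p. transversal_mat n f $$ p) (transversal_positions n) = f"
proof
  fix p
  show "restrict (\<lambda>p. transversal_mat n f $$ p) (transversal_positions n) p = f p"
    using PiE_arb[OF assms, of p] by (cases p) (auto simp: transversal_mat_def transversal_positions_def)
qed

lemma transversal_mat_mem_S0_transversal: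
  assumes n: "n \<ge> 2" and f: "f \<in> PiE (transversal_positions n) transversal_entries"
  shows "(transversal_mat n f :: 'a::field mat) \<in> S0_transversal n"
proof -
  have "transversal_mat n f $$ (i, Suc i) \<noteq> (0 :: 'a)" if "Suc i < n" for i
  proof (cases "Suc i = n - 1")
    case False
    then have "(i, Suc i) \<in> transversal_positions n" using that by (auto simp: transversal_positions_def)
    then show ?thesis
      using PiE_mem[OF f] that by (force simp: transversal_mat_def transversal_entries_def)
  qed (use that in \<open>auto simp: transversal_mat_def transversal_positions_def\<close>)
  then show ?thesis
    using n by (auto simp: S0_transversal_def mem_S0_iff transversal_mat_def transversal_positions_def)
qed

lemma S0_transversal_bij:
  assumes n: "n \<ge> 2"
  shows "bij_betw (\<lambda>A. restrict (\<lambda>p. A $$ p) (transversal_positions n))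
           (S0_transversal n :: 'a::field mat set) (PiE (transversal_positions n) transversal_entries)"
proof (rule bij_betw_byWitness[where f' = "transversal_mat n"])
  show "(\<lambda>A. restrict (\<lambda>p. A $$ p) (transversal_positions n)) ` S0_transversal n
          \<subseteq> PiE (transversal_positions n) (transversal_entries :: _ \<Rightarrow> 'a set)"
    by (auto simp: S0_transversal_def mem_S0_iff transversal_positions_def transversal_entries_def)
qed (use transversal_mat_restrict[OF n] restrict_transversal_mat
      transversal_mat_mem_S0_transversal[OF n] in auto)

lemma card_nonadjacent_pairs: "card {(i, j). Suc i < j \<and> j < k} = (k - 1) choose 2"
proof (induction k)
  case 0
  then show ?case by simp
next
  case (Suc k)
  have split: "{(i, j). Suc i < j \<and> j < Suc k} = {(i, j). Suc i < j \<and> j < k} \<union> (\<lambda>i. (i, k)) ` {..<k - 1}"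
    by auto
  have "finite {(i, j). Suc i < j \<and> j < k}"
    by (rule finite_subset[of _ "{..<k} \<times> {..<k}"]) auto
  moreover have "card ((\<lambda>i. (i, k)) ` {..<k - 1}) = k - 1"
    by (subst card_image) (auto simp: inj_on_def)
  ultimately have "card {(i, j). Suc i < j \<and> j < Suc k} = ((k - 1) choose 2) + (k - 1)"
    unfolding split using Suc.IH by (subst card_Un_disjoint) auto
  also have "\<dots> = Suc k - 1 choose 2"
    by (cases k) (simp_all add: numeral_2_eq_2)
  finally show ?case .
qed

lemma card_S0_transversal:
  assumes n: "n \<ge> 2"
  shows "card (S0_transversal n :: 'a::{field,finite} mat set)
           = (card (UNIV :: 'a set) - 1) ^ (n - 2) * card (UNIV :: 'a set) ^ ((n - 2) choose 2)"
proof -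
  let ?q = "card (UNIV :: 'a set)" and ?I = "transversal_positions n"
  let ?adjacent = "{p. snd p = Suc (fst p)}"
  have "card (S0_transversal n :: 'a mat set) = card (PiE ?I (transversal_entries :: _ \<Rightarrow> 'a set))"
    using bij_betw_same_card[OF S0_transversal_bij[OF n]] .
  also have "\<dots> = (\<Prod>p\<in>?I. card (transversal_entries p :: 'a set))"
    by (rule card_PiE[OF finite_transversal_positions])
  also have "\<dots> = (\<Prod>p\<in>?I. if p \<in> ?adjacent then ?q - 1 else ?q)"
    by (rule prod.cong) (auto simp: transversal_entries_def Compl_eq_Diff_UNIV card_Diff_singleton)
  also have "\<dots> = (?q - 1) ^ card (?I \<inter> ?adjacent) * ?q ^ card (?I \<inter> - ?adjacent)"
    by (simp add: prod.If_cases[OF finite_transversal_positions])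
  also have "?I \<inter> ?adjacent = (\<lambda>i. (i, Suc i)) ` {..<n - 2}"
    by (auto simp: transversal_positions_def)
  also have "card \<dots> = n - 2" by (subst card_image) (auto simp: inj_on_def)
  also have "?I \<inter> - ?adjacent = {(i, j). Suc i < j \<and> j < n - 1}"
    by (auto simp: transversal_positions_def)
  also have "card \<dots> = (n - 2) choose 2"
    using card_nonadjacent_pairs[of "n - 1"] by (simp add: numeral_2_eq_2)
  finally show ?thesis .
qed

section \<open>Non-commuting subsets\<close>

lemma omega_eq_card_of_commuting_transversal:
  fixes S R :: "'a::times set"
  assumes R: "R \<subseteq> S" "finite R" "non_commuting R"
    and meets: "\<And>x. x \<in> S \<Longrightarrow> \<exists>r\<in>R. x * r = r * x"
    and trans: "\<And>x y r. x \<in> S \<Longrightarrow> y \<in> S \<Longrightarrow> r \<in> R \<Longrightarrow> x * r = r * x \<Longrightarrow> y * r = r * y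
      \<Longrightarrow> x * y = y * x"
  shows "omega S = card R"
proof -
  have card_le: "card X \<le> card R" if X: "X \<subseteq> S" "non_commuting X" for X
  proof -
    define rep where "rep x = (SOME r. r \<in> R \<and> x * r = r * x)" for x
    have rep: "rep x \<in> R \<and> x * rep x = rep x * x" if "x \<in> X" for x
      unfolding rep_def by (rule someI_ex) (use meets X(1) that in blast)
    have "inj_on rep X"
    proof (rule inj_onI)
      fix x y assume xy: "x \<in> X" "y \<in> X" "rep x = rep y"
      have "x * y = y * x"
        by (rule trans[of x y "rep x"]) (use xy rep[of x] rep[of y] X(1) in auto)
      then show "x = y" using X(2) xy(1,2) by (auto simp: non_commuting_def)
    qed
    then show ?thesis using card_inj_on_le[of rep X R] rep R(2) by blast
  qed
  show ?thesis
    unfolding omega_def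
  proof (rule Max_eqI)
    show "finite {card N | N. N \<subseteq> S \<and> finite N \<and> non_commuting N}"
      by (rule finite_subset[of _ "{..card R}"]) (use card_le in auto)
  qed (use R card_le in auto)
qed

theorem theorem3p5:
  fixes n :: nat
  assumes "n \<ge> 2"
  shows "omega (S0 n :: 'a::{field,finite} mat set)
           = (card (UNIV :: 'a set) - 1) ^ (n - 2) * card (UNIV :: 'a set) ^ ((n - 2) choose 2)"
proof -
  let ?T = "S0_transversal n :: 'a mat set"
  have "omega (S0 n :: 'a mat set) = card ?T"
  proof (rule omega_eq_card_of_commuting_transversal)
    show "?T \<subseteq> S0 n" by (auto simp: S0_transversal_def)
    show "finite ?T"
      using bij_betw_finite[OF S0_transversal_bij[OF assms]] finite_transversal_positions
      by (auto intro: finite_PiE)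
    show "non_commuting ?T"
      using S0_transversal_non_commuting by (auto simp: non_commuting_def)
    show "\<exists>r\<in>?T. x * r = r * x" if "x \<in> S0 n" for x
      using ex_S0_transversal_commute[OF assms that] .
    show "x * y = y * x" if "x \<in> S0 n" "y \<in> S0 n" "r \<in> ?T" "x * r = r * x" "y * r = r * y" for x y r
      by (rule S0_commute_trans[of r n]) (use that in \<open>auto simp: S0_transversal_def mem_S0_iff\<close>)
  qed
  then show ?thesis using card_S0_transversal[OF assms] by simp
qed

end
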